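(* Fix $n$ and $p\in[0,1]$. For $N_l\in\{1,\dots,n\}$ with $N_l\equiv n\pmod 2$, let $N_h=(n+N_l)/2$ and $N_b=(n-N_l)/2$ (so $N_b+N_h=n$, $N_h-N_b=N_l$), and let $M^{(n,N_l)}=\max_i\Delta_iH^1$ under $\mathbb{P}^{n,N_b,N_h,p}$. Then $N_l\mapsto M^{(n,N_l)}$ is non-increasing for the stochastic order.
   Context: Golf process on $\mathbb{Z}/n\mathbb{Z}$ under $\mathbb{P}^{n,N_b,N_h,p}$: initial configuration uniform among assignments with exactly $N_b$ balls and $N_h$ holes, the rest neutral; clocks i.i.d. uniform on $[0,1]$; at its clock time each ball performs an independent random walk (step $+1$ w.p. $p$, $-1$ w.p. $1-p$) stopped at the first not-yet-filled hole, which it fills. $H^1$ is the set of holes never filled; $\Delta_iH^1$ are the numbers of vertices strictly between cyclically consecutive elements of $H^1$. *)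

theory Defs
  imports Complex_Main
begin

text \<open>Vertices of Z/nZ are represented by 0..<n.
  walk_hit n p k U x h: probability that the random walk on Z/nZ started at x
  (step +1 w.p. p, -1 w.p. 1-p) hits the set U within k steps and that the
  first vertex of U it visits is h.\<close>

fun walk_hit :: "nat \<Rightarrow> real \<Rightarrow> nat \<Rightarrow> nat set \<Rightarrow> nat \<Rightarrow> nat \<Rightarrow> real" where
  "walk_hit n p 0 U x h = (if x \<in> U then (if x = h then 1 else 0) else 0)"
| "walk_hit n p (Suc k) U x h =
     (if x \<in> U then (if x = h then 1 else 0)
      else p * walk_hit n p k U ((x + 1) mod n) h
         + (1 - p) * walk_hit n p k U ((x + n - 1) mod n) h)"

definition hit_prob :: "nat \<Rightarrow> real \<Rightarrow> nat set \<Rightarrow> nat \<Rightarrow> nat \<Rightarrow> real" where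
  "hit_prob n p U x h = (SUP k. walk_hit n p k U x h)"

text \<open>Given the current set U of not-yet-filled holes and the list of balls in the
  order of their clocks, final_dist gives the probability that the final set of
  unfilled holes is S.\<close>
fun final_dist :: "nat \<Rightarrow> real \<Rightarrow> nat set \<Rightarrow> nat list \<Rightarrow> nat set \<Rightarrow> real" where
  "final_dist n p U [] S = (if S = U then 1 else 0)"
| "final_dist n p U (x # xs) S = (\<Sum>h\<in>U. hit_prob n p U x h * final_dist n p (U - {h}) xs S)"

definition configs :: "nat \<Rightarrow> nat \<Rightarrow> nat \<Rightarrow> (nat set \<times> nat set) set" where
  "configs n Nb Nh = {(B, H). B \<subseteq> {0..<n} \<and> H \<subseteq> {0..<n} \<and> B \<inter> H = {}
                        \<and> card B = Nb \<and> card H = Nh}"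

text \<open>Orderings of the balls (induced by i.i.d. continuous clocks: uniform).\<close>
definition orderings :: "nat set \<Rightarrow> nat list set" where
  "orderings B = {xs. distinct xs \<and> set xs = B}"

definition golf_H1_prob :: "nat \<Rightarrow> nat \<Rightarrow> nat \<Rightarrow> real \<Rightarrow> nat set \<Rightarrow> real" where
  "golf_H1_prob n Nb Nh p S =
     (\<Sum>(B, H)\<in>configs n Nb Nh.
        (\<Sum>xs\<in>orderings B. final_dist n p H xs S) / real (card (orderings B)))
     / real (card (configs n Nb Nh))"

definition gap :: "nat \<Rightarrow> nat set \<Rightarrow> nat \<Rightarrow> nat" where
  "gap n S a = (LEAST d. 0 < d \<and> (a + d) mod n \<in> S) - 1"

definition max_gap :: "nat \<Rightarrow> nat set \<Rightarrow> nat" where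
  "max_gap n S = Max (gap n S ` S)"

definition M_tail :: "nat \<Rightarrow> real \<Rightarrow> nat \<Rightarrow> nat \<Rightarrow> real" where
  "M_tail n p Nl t =
     (\<Sum>S\<in>{S. S \<subseteq> {0..<n} \<and> S \<noteq> {} \<and> t \<le> max_gap n S}.
        golf_H1_prob n ((n - Nl) div 2) ((n + Nl) div 2) p S)"

end

theory Submission
  imports Defs "HOL-Combinatorics.Multiset_Permutations"
begin

(* Raising N_l by 2 turns one ball into a hole.  Fire that ball b last: up to then, the process
   started with an extra hole at b can be coupled with the original one so that its set of
   unfilled holes is the original set plus one vertex (a ball falling into the extra hole
   continues from there in the original process, by the strong Markov property).  When b finally
   fires in the original process it removes one hole from a set of at least two, so H^1 for
   N_l + 2 contains H^1 for N_l, and the maximal gap can only shrink.  Averaging over the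
   configurations gives the result, since a uniform configuration with one ball fewer is a
   uniform configuration with a uniformly chosen ball turned into a hole, and a uniform ordering
   of the balls is a uniform last ball after a uniform ordering of the others. *)

section \<open>Hitting distributions of the walk\<close>

definition harmonic_off :: "nat \<Rightarrow> real \<Rightarrow> nat set \<Rightarrow> (nat \<Rightarrow> real) \<Rightarrow> bool" where
  "harmonic_off n p A f \<longleftrightarrow>
     (\<forall>x<n. x \<notin> A \<longrightarrow> f x = p * f ((x + 1) mod n) + (1 - p) * f ((x + n - 1) mod n))"

lemma succ_closed_residues:
  fixes n x0 y :: nat
  assumes closed: "\<And>x. x \<in> Z \<Longrightarrow> (x + 1) mod n \<in> Z" and "x0 \<in> Z" "x0 < n" "y < n"
  shows "y \<in> Z"
proof -
  have "(x0 + j) mod n \<in> Z" for j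
  proof (induction j)
    case 0
    then show ?case using assms by simp
  next
    case (Suc j)
    then show ?case using closed[of "(x0 + j) mod n"] by (simp add: mod_Suc_eq)
  qed
  from this[of "y + n - x0"] show ?thesis using assms by simp
qed

lemma pred_closed_residues:
  fixes n x0 y :: nat
  assumes closed: "\<And>x. x \<in> Z \<Longrightarrow> (x + n - 1) mod n \<in> Z"
    and "Z \<subseteq> {0..<n}" "x0 \<in> Z" "y < n"
  shows "y \<in> Z"
proof (rule ccontr)
  assume "y \<notin> Z"
  \<comment> \<open>then the complement of Z is closed under successors\<close>
  have "(x + 1) mod n \<in> {0..<n} - Z" if x: "x \<in> {0..<n} - Z" for x
  proof -
    have "((x + 1) mod n + n - 1) mod n = x"
      using x by (cases "x + 1 = n") auto
    then show ?thesis using x closed[of "(x + 1) mod n"] by auto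
  qed
  then have "x0 \<in> {0..<n} - Z"
    using succ_closed_residues[of "{0..<n} - Z" n y x0] \<open>y \<notin> Z\<close> assms by auto
  then show False using assms by simp
qed

context
  fixes n :: nat and p :: real
  assumes p_prob: "0 \<le> p" "p \<le> 1"
begin

lemma walk_hit_nonneg: "0 \<le> walk_hit n p k U x h"
  using p_prob by (induction k arbitrary: x) auto

lemma walk_hit_le_1: "walk_hit n p k U x h \<le> 1"
proof (induction k arbitrary: x)
  case (Suc k)
  have "p * walk_hit n p k U ((x + 1) mod n) h \<le> p"
    "(1 - p) * walk_hit n p k U ((x + n - 1) mod n) h \<le> 1 - p"
    using Suc p_prob by (auto intro!: mult_left_le)
  then show ?case by auto
qed simp

lemma walk_hit_le_Suc: "walk_hit n p k U x h \<le> walk_hit n p (Suc k) U x h"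
proof (induction k arbitrary: x)
  case 0
  show ?case using p_prob walk_hit_nonneg by simp
next
  case (Suc k)
  have "p * walk_hit n p k U ((x + 1) mod n) h \<le> p * walk_hit n p (Suc k) U ((x + 1) mod n) h"
    "(1 - p) * walk_hit n p k U ((x + n - 1) mod n) h
       \<le> (1 - p) * walk_hit n p (Suc k) U ((x + n - 1) mod n) h"
    using Suc p_prob by (intro mult_left_mono; simp)+
  then show ?case by (subst (1 2) walk_hit.simps(2)) auto
qed

lemma walk_hit_LIMSEQ: "(\<lambda>k. walk_hit n p k U x h) \<longlonglongrightarrow> hit_prob n p U x h"
  unfolding hit_prob_def
proof (rule LIMSEQ_incseq_SUP)
  show "bdd_above (range (\<lambda>k. walk_hit n p k U x h))"
    using walk_hit_le_1 by (intro bdd_aboveI2) auto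
  show "incseq (\<lambda>k. walk_hit n p k U x h)"
    using walk_hit_le_Suc by (rule incseq_SucI)
qed

lemma hit_prob_nonneg: "0 \<le> hit_prob n p U x h"
  by (rule LIMSEQ_le_const[OF walk_hit_LIMSEQ]) (use walk_hit_nonneg in auto)

lemma hit_prob_mem:
  assumes "x \<in> U"
  shows "hit_prob n p U x h = of_bool (x = h)"
proof -
  have "walk_hit n p k U x h = of_bool (x = h)" for k
    using assms by (cases k) auto
  then show ?thesis using walk_hit_LIMSEQ[of U x h] by (simp add: LIMSEQ_const_iff)
qed

lemma hit_prob_step:
  assumes "x \<notin> U"
  shows "hit_prob n p U x h = p * hit_prob n p U ((x + 1) mod n) h
           + (1 - p) * hit_prob n p U ((x + n - 1) mod n) h"
proof -
  have "(\<lambda>k. walk_hit n p (Suc k) U x h) \<longlonglongrightarrow> p * hit_prob n p U ((x + 1) mod n) h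
           + (1 - p) * hit_prob n p U ((x + n - 1) mod n) h"
    using assms by (simp, intro tendsto_intros walk_hit_LIMSEQ)
  moreover have "(\<lambda>k. walk_hit n p (Suc k) U x h) \<longlonglongrightarrow> hit_prob n p U x h"
    using walk_hit_LIMSEQ by (rule LIMSEQ_Suc)
  ultimately show ?thesis using LIMSEQ_unique by blast
qed

lemma harmonic_off_le_0:
  assumes A: "A \<subseteq> {0..<n}" "A \<noteq> {}" and nonpos: "\<And>a. a \<in> A \<Longrightarrow> f a \<le> 0"
    and harm: "harmonic_off n p A f" and x: "x < n"
  shows "f x \<le> 0"
proof (rule ccontr)
  assume "\<not> f x \<le> 0"
  define M where "M = Max (f ` {0..<n})"
  define Z where "Z = {y. y < n \<and> f y = M}"
  have le_M: "f y \<le> M" if "y < n" for y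
    using that unfolding M_def by (intro Max_ge) auto
  have "M \<in> f ` {0..<n}"
    unfolding M_def using x by (intro Max_in) auto
  then obtain x0 where x0: "x0 \<in> Z" unfolding Z_def by auto
  have "0 < M" using le_M[OF x] \<open>\<not> f x \<le> 0\<close> by simp
  then have Z_A: "Z \<inter> A = {}" using nonpos unfolding Z_def by force
  have neighbours: "(p = 0 \<or> (y + 1) mod n \<in> Z) \<and> (p = 1 \<or> (y + n - 1) mod n \<in> Z)"
    if "y \<in> Z" for y
  proof -
    let ?r = "(y + 1) mod n" and ?l = "(y + n - 1) mod n"
    have "y < n" "y \<notin> A" "f y = M" using that Z_A unfolding Z_def by auto
    then have "p * (M - f ?r) + (1 - p) * (M - f ?l) = 0"
      using harm unfolding harmonic_off_def by (auto simp: algebra_simps)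
    moreover have "0 \<le> p * (M - f ?r)" "0 \<le> (1 - p) * (M - f ?l)"
      using p_prob le_M \<open>y < n\<close> by simp_all
    ultimately have "p * (M - f ?r) = 0" "(1 - p) * (M - f ?l) = 0" by linarith+
    then show ?thesis using \<open>y < n\<close> unfolding Z_def by auto
  qed
  obtain a where "a \<in> A" using A by blast
  then have "a < n" using A by auto
  have "x0 < n" "Z \<subseteq> {0..<n}" using x0 unfolding Z_def by auto
  \<comment> \<open>Z spreads in a direction in which the walk moves with positive probability\<close>
  have "a \<in> Z"
  proof (cases "p = 0")
    case True
    show ?thesis
      by (rule pred_closed_residues[OF _ \<open>Z \<subseteq> {0..<n}\<close> x0 \<open>a < n\<close>]) (use neighbours True in auto)
  next
    case False
    show ?thesis
      by (rule succ_closed_residues[OF _ x0 \<open>x0 < n\<close> \<open>a < n\<close>]) (use neighbours False in auto)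
  qed
  then show False using Z_A \<open>a \<in> A\<close> by blast
qed

lemma harmonic_off_diff:
  assumes f: "harmonic_off n p A f" and g: "harmonic_off n p A g"
  shows "harmonic_off n p A (\<lambda>x. f x - g x)"
  unfolding harmonic_off_def
proof (intro allI impI)
  fix x assume "x < n" "x \<notin> A"
  then have "f x = p * f ((x + 1) mod n) + (1 - p) * f ((x + n - 1) mod n)"
    and "g x = p * g ((x + 1) mod n) + (1 - p) * g ((x + n - 1) mod n)"
    using f g unfolding harmonic_off_def by blast+
  then show "f x - g x = p * (f ((x + 1) mod n) - g ((x + 1) mod n))
      + (1 - p) * (f ((x + n - 1) mod n) - g ((x + n - 1) mod n))"
    by (simp add: algebra_simps)
qed

lemma harmonic_off_unique:
  assumes "A \<subseteq> {0..<n}" "A \<noteq> {}" "\<And>a. a \<in> A \<Longrightarrow> f a = g a"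
    and "harmonic_off n p A f" "harmonic_off n p A g" "x < n"
  shows "f x = g x"
  using harmonic_off_le_0[of A "\<lambda>x. f x - g x" x] harmonic_off_le_0[of A "\<lambda>x. g x - f x" x]
    harmonic_off_diff assms by force

lemma harmonic_off_hit_prob: "U \<subseteq> A \<Longrightarrow> harmonic_off n p A (\<lambda>x. hit_prob n p U x h)"
  unfolding harmonic_off_def using hit_prob_step by blast

lemma sum_hit_prob:
  assumes U: "U \<subseteq> {0..<n}" "U \<noteq> {}" and "x < n"
  shows "(\<Sum>h\<in>U. hit_prob n p U x h) = 1"
proof -
  have "finite U" using U(1) by (rule finite_subset) simp
  have "harmonic_off n p U (\<lambda>x. \<Sum>h\<in>U. hit_prob n p U x h)"
    unfolding harmonic_off_def using hit_prob_step by (auto simp: sum.distrib sum_distrib_left)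
  moreover have "harmonic_off n p U (\<lambda>x. 1)"
    unfolding harmonic_off_def by simp
  moreover have "(\<Sum>h\<in>U. hit_prob n p U y h) = 1" if "y \<in> U" for y
    using that \<open>finite U\<close> by (simp add: hit_prob_mem)
  ultimately show ?thesis
    using harmonic_off_unique[OF U, of "\<lambda>x. \<Sum>h\<in>U. hit_prob n p U x h" "\<lambda>x. 1"] \<open>x < n\<close> by blast
qed

text \<open>Strong Markov property at the vertex c: a walk stopped at U either reaches U before c,
  or first visits c and then restarts from there.\<close>

lemma hit_prob_insert:
  assumes "U \<subseteq> {0..<n}" "c < n" "c \<notin> U" "h \<in> U" "x < n"
  shows "hit_prob n p U x h
           = hit_prob n p (insert c U) x h + hit_prob n p (insert c U) x c * hit_prob n p U c h"
proof -
  let ?V = "insert c U"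
  have V: "?V \<subseteq> {0..<n}" "?V \<noteq> {}" using assms by auto
  have lhs: "harmonic_off n p ?V (\<lambda>x. hit_prob n p U x h)"
    by (rule harmonic_off_hit_prob) auto
  have rhs: "harmonic_off n p ?V (\<lambda>x. hit_prob n p ?V x h + hit_prob n p ?V x c * hit_prob n p U c h)"
    unfolding harmonic_off_def
  proof (intro allI impI)
    fix y assume "y \<notin> ?V"
    note step = hit_prob_step[OF this]
    show "hit_prob n p ?V y h + hit_prob n p ?V y c * hit_prob n p U c h
      = p * (hit_prob n p ?V ((y + 1) mod n) h + hit_prob n p ?V ((y + 1) mod n) c * hit_prob n p U c h)
      + (1 - p) * (hit_prob n p ?V ((y + n - 1) mod n) h
                   + hit_prob n p ?V ((y + n - 1) mod n) c * hit_prob n p U c h)"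
      by (subst step[of h], subst step[of c]) (simp add: algebra_simps)
  qed
  have "hit_prob n p U y h = hit_prob n p ?V y h + hit_prob n p ?V y c * hit_prob n p U c h"
    if "y \<in> ?V" for y
    using that assms by (auto simp: hit_prob_mem)
  then show ?thesis
    using harmonic_off_unique[OF V _ lhs rhs \<open>x < n\<close>] by blast
qed

end

section \<open>Expectations over the final set of holes\<close>

fun final_expect :: "nat \<Rightarrow> real \<Rightarrow> nat set \<Rightarrow> nat list \<Rightarrow> (nat set \<Rightarrow> real) \<Rightarrow> real" where
  "final_expect n p U [] g = g U"
| "final_expect n p U (x # xs) g = (\<Sum>h\<in>U. hit_prob n p U x h * final_expect n p (U - {h}) xs g)"

lemma sum_final_dist:
  assumes "finite T"
  shows "(\<Sum>S\<in>T. final_dist n p U xs S) = final_expect n p U xs (\<lambda>S. of_bool (S \<in> T))"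
proof (induction xs arbitrary: U)
  case Nil
  then show ?case using assms by simp
next
  case (Cons x xs)
  have "(\<Sum>S\<in>T. final_dist n p U (x # xs) S)
      = (\<Sum>h\<in>U. \<Sum>S\<in>T. hit_prob n p U x h * final_dist n p (U - {h}) xs S)"
    by (simp add: sum.swap[of _ T])
  also have "\<dots> = final_expect n p U (x # xs) (\<lambda>S. of_bool (S \<in> T))"
    by (simp add: Cons sum_distrib_left[symmetric])
  finally show ?case .
qed

lemma final_expect_snoc:
  "final_expect n p U (xs @ [b]) g
     = final_expect n p U xs (\<lambda>S. \<Sum>h\<in>S. hit_prob n p S b h * g (S - {h}))"
  by (induction xs arbitrary: U) auto

context
  fixes n :: nat and p :: real
  assumes p_prob: "0 \<le> p" "p \<le> 1"
begin

text \<open>If a ball falls into the extra hole c, in the original process it continues from c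
  (strong Markov property), and afterwards the two hole sets again differ by a single hole,
  namely where it stops.\<close>

lemma final_expect_insert_hole_le:
  assumes g_le_h: "\<And>S e. S \<subseteq> {0..<n} \<Longrightarrow> e < n \<Longrightarrow> e \<notin> S \<Longrightarrow> card S = m \<Longrightarrow> g (insert e S) \<le> h S"
    and "U \<subseteq> {0..<n}" "c < n" "c \<notin> U" "set ys \<subseteq> {0..<n}" "card U = length ys + m"
  shows "final_expect n p (insert c U) ys g \<le> final_expect n p U ys h"
  using assms(2-)
proof (induction ys arbitrary: U c)
  case Nil
  then show ?case using g_le_h by simp
next
  case (Cons x xs)
  let ?q = "hit_prob n p (insert c U) x"
  have "finite U" using Cons.prems(1) by (rule finite_subset) simp
  have "U \<noteq> {}" "x < n" using Cons.prems(4,5) by auto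
  have IH: "final_expect n p (insert e (U - {k})) xs g \<le> final_expect n p (U - {k}) xs h"
    if "k \<in> U" "e < n" "e \<notin> U - {k}" for k e
    using Cons.IH[of "U - {k}" e] Cons.prems that \<open>finite U\<close> by auto
  have "final_expect n p (insert c U) (x # xs) g
      = ?q c * final_expect n p U xs g
        + (\<Sum>k\<in>U. ?q k * final_expect n p (insert c (U - {k})) xs g)"
    using \<open>finite U\<close> Cons.prems(3) by (auto simp: insert_Diff_if intro!: sum.cong)
  also have "\<dots> \<le> ?q c * (\<Sum>k\<in>U. hit_prob n p U c k * final_expect n p (U - {k}) xs h)
      + (\<Sum>k\<in>U. ?q k * final_expect n p (U - {k}) xs h)"
  proof (intro add_mono mult_left_mono sum_mono hit_prob_nonneg[OF p_prob])
    have "final_expect n p U xs g = (\<Sum>k\<in>U. hit_prob n p U c k * final_expect n p U xs g)"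
      using sum_hit_prob[OF p_prob Cons.prems(1) \<open>U \<noteq> {}\<close> Cons.prems(2)]
      by (simp add: sum_distrib_right[symmetric])
    also have "\<dots> \<le> (\<Sum>k\<in>U. hit_prob n p U c k * final_expect n p (U - {k}) xs h)"
    proof (intro sum_mono mult_left_mono hit_prob_nonneg[OF p_prob])
      fix k assume "k \<in> U"
      then show "final_expect n p U xs g \<le> final_expect n p (U - {k}) xs h"
        using IH[of k k] Cons.prems(1) by (auto simp: insert_absorb)
    qed
    finally show "final_expect n p U xs g
      \<le> (\<Sum>k\<in>U. hit_prob n p U c k * final_expect n p (U - {k}) xs h)" .
  qed (use IH Cons.prems in auto)
  also have "\<dots> = (\<Sum>k\<in>U. hit_prob n p U x k * final_expect n p (U - {k}) xs h)"
    using hit_prob_insert[OF p_prob Cons.prems(1-3) _ \<open>x < n\<close>]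
    by (simp add: sum_distrib_left sum.distrib[symmetric] algebra_simps)
  finally show ?case by simp
qed

lemma final_expect_ball_last_le:
  assumes anti: "\<And>A A'. A \<noteq> {} \<Longrightarrow> A \<subseteq> A' \<Longrightarrow> A' \<subseteq> {0..<n} \<Longrightarrow> g A' \<le> g A"
    and "H \<subseteq> {0..<n}" "b < n" "b \<notin> H" "set ys \<subseteq> {0..<n}" "length ys + 2 \<le> card H"
  shows "final_expect n p (insert b H) ys g \<le> final_expect n p H (ys @ [b]) g"
proof -
  define m where "m = card H - length ys"
  have "final_expect n p (insert b H) ys g
      \<le> final_expect n p H ys (\<lambda>S. \<Sum>k\<in>S. hit_prob n p S b k * g (S - {k}))"
  proof (rule final_expect_insert_hole_le)
    fix S e assume S: "S \<subseteq> {0..<n}" "e < n" "e \<notin> S" "card S = m"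
    have "2 \<le> card S" using S(4) assms(6) by (simp add: m_def)
    then have "S \<noteq> {}" by auto
    have "g (insert e S) = (\<Sum>k\<in>S. hit_prob n p S b k * g (insert e S))"
      using sum_hit_prob[OF p_prob S(1) \<open>S \<noteq> {}\<close> \<open>b < n\<close>]
      by (simp add: sum_distrib_right[symmetric])
    also have "\<dots> \<le> (\<Sum>k\<in>S. hit_prob n p S b k * g (S - {k}))"
    proof (intro sum_mono mult_left_mono hit_prob_nonneg[OF p_prob])
      fix k assume "k \<in> S"
      then have "card (S - {k}) = card S - 1" by simp
      then have "0 < card (S - {k})" using \<open>2 \<le> card S\<close> by linarith
      then have "S - {k} \<noteq> {}" by (metis card.empty less_irrefl)
      then show "g (insert e S) \<le> g (S - {k})" using S by (intro anti) auto
    qed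
    finally show "g (insert e S) \<le> (\<Sum>k\<in>S. hit_prob n p S b k * g (S - {k}))" .
  qed (use assms in \<open>auto simp: m_def\<close>)
  then show ?thesis by (simp add: final_expect_snoc)
qed

end

section \<open>Gaps\<close>

lemma next_mem:
  fixes n a :: nat
  assumes "S \<subseteq> {0..<n}" "a \<in> S"
  shows "0 < (LEAST d. 0 < d \<and> (a + d) mod n \<in> S) \<and> (a + (LEAST d. 0 < d \<and> (a + d) mod n \<in> S)) mod n \<in> S"
  by (rule LeastI[of _ n]) (use assms in auto)

text \<open>Every gap of a larger set lies inside a gap of the smaller one: the one that starts at the
  last point a0 of A before a.\<close>

lemma gap_le_gap_subset:
  assumes A: "A \<subseteq> A'" "A' \<subseteq> {0..<n}" "A \<noteq> {}" and "a \<in> A'"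
  obtains a0 where "a0 \<in> A" "gap n A' a \<le> gap n A a0"
proof -
  have "a < n" using assms by auto
  define P where "P = {r. \<exists>a0\<in>A. (a0 + r) mod n = a}"
  define r where "r = (LEAST r. r \<in> P)"
  obtain b where "b \<in> A" using A by blast
  then have "(b + (a + n - b)) mod n = a" "b < n" using A \<open>a < n\<close> by auto
  then have "a + n - b \<in> P" unfolding P_def using \<open>b \<in> A\<close> by blast
  then have "r \<in> P" unfolding r_def by (rule LeastI)
  then obtain a0 where a0: "a0 \<in> A" "(a0 + r) mod n = a" unfolding P_def by blast
  define D where "D = (LEAST d. 0 < d \<and> (a0 + d) mod n \<in> A)"
  have D: "0 < D" "(a0 + D) mod n \<in> A"
    using next_mem[of A n a0] a0 A unfolding D_def by auto
  have "r < D"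
  proof (rule ccontr)
    assume "\<not> r < D"
    have "((a0 + D) mod n + (r - D)) mod n = (a0 + D + (r - D)) mod n" by (rule mod_add_left_eq)
    also have "a0 + D + (r - D) = a0 + r" using \<open>\<not> r < D\<close> by simp
    finally have "((a0 + D) mod n + (r - D)) mod n = a" using a0(2) by simp
    then have "r - D \<in> P" unfolding P_def using D(2) by blast
    then have "r \<le> r - D" unfolding r_def by (rule Least_le)
    then show False using D(1) \<open>\<not> r < D\<close> by simp
  qed
  have "(a + (D - r)) mod n = ((a0 + r) mod n + (D - r)) mod n" using a0(2) by simp
  also have "\<dots> = (a0 + r + (D - r)) mod n" by (rule mod_add_left_eq)
  also have "a0 + r + (D - r) = a0 + D" using \<open>r < D\<close> by simp
  finally have "(a + (D - r)) mod n = (a0 + D) mod n" .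
  then have "(LEAST d. 0 < d \<and> (a + d) mod n \<in> A') \<le> D - r"
    using \<open>r < D\<close> D(2) A(1) by (intro Least_le) auto
  then have "gap n A' a \<le> gap n A a0" unfolding gap_def D_def[symmetric] by simp
  with a0(1) show thesis by (rule that)
qed

lemma max_gap_antimono:
  assumes "A \<subseteq> A'" "A' \<subseteq> {0..<n}" "A \<noteq> {}"
  shows "max_gap n A' \<le> max_gap n A"
proof -
  have "finite A'" using assms(2) by (rule finite_subset) simp
  then have "finite A" using assms(1) by (rule rev_finite_subset)
  have "gap n A' a \<le> Max (gap n A ` A)" if a: "a \<in> A'" for a
  proof -
    obtain a0 where "a0 \<in> A" "gap n A' a \<le> gap n A a0"
      using gap_le_gap_subset[OF assms a] .
    moreover have "gap n A a0 \<le> Max (gap n A ` A)"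
      using \<open>finite A\<close> \<open>a0 \<in> A\<close> by (intro Max_ge) auto
    ultimately show ?thesis by linarith
  qed
  moreover have "A' \<noteq> {}" using assms by blast
  ultimately show ?thesis
    unfolding max_gap_def using \<open>finite A'\<close> by (simp add: Max_le_iff)
qed

section \<open>Averaging over configurations and orderings\<close>

lemma orderings_eq_permutations_of_set: "orderings B = permutations_of_set B"
  unfolding orderings_def permutations_of_set_def by auto

lemma finite_orderings: "finite (orderings B)"
  by (simp add: orderings_eq_permutations_of_set)

lemma card_orderings: "finite B \<Longrightarrow> card (orderings B) = fact (card B)"
  by (simp add: orderings_eq_permutations_of_set)

lemma sum_orderings_by_last:
  assumes "finite B" "B \<noteq> {}"
  shows "(\<Sum>xs\<in>orderings B. f xs) = (\<Sum>b\<in>B. \<Sum>ys\<in>orderings (B - {b}). f (ys @ [b]))"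
proof -
  have last_split: "last xs \<in> B \<and> butlast xs \<in> orderings (B - {last xs}) \<and> butlast xs @ [last xs] = xs"
    if "xs \<in> orderings B" for xs
  proof -
    have "xs \<noteq> []" using that assms(2) by (auto simp: orderings_def)
    then obtain ys b where "xs = ys @ [b]" by (cases xs rule: rev_exhaust) auto
    then show ?thesis using that by (auto simp: orderings_def)
  qed
  have bij: "bij_betw (\<lambda>(b, ys). ys @ [b]) (SIGMA b:B. orderings (B - {b})) (orderings B)"
    by (rule bij_betw_byWitness[where f' = "\<lambda>xs. (last xs, butlast xs)"])
      (use last_split in \<open>auto simp: orderings_def\<close>)
  then have "(\<Sum>xs\<in>orderings B. f xs) = (\<Sum>(b, ys)\<in>Sigma B (\<lambda>b. orderings (B - {b})). f (ys @ [b]))"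
    by (simp add: sum.reindex_bij_betw[symmetric] case_prod_unfold)
  also have "\<dots> = (\<Sum>b\<in>B. \<Sum>ys\<in>orderings (B - {b}). f (ys @ [b]))"
    using assms(1) finite_orderings by (simp add: sum.Sigma)
  finally show ?thesis .
qed

lemma finite_configs: "finite (configs n Nb Nh)"
  by (rule finite_subset[of _ "Pow {0..<n} \<times> Pow {0..<n}"]) (auto simp: configs_def)

lemma configs_finite:
  assumes "c \<in> configs n Nb Nh"
  shows "finite (fst c)" "finite (snd c)"
  using assms unfolding configs_def by (auto intro: finite_subset[of _ "{0..<n}"])

lemma card_configs_pos:
  assumes "Nb + Nh \<le> n"
  shows "0 < card (configs n Nb Nh)"
proof -
  have "({0..<Nb}, {Nb..<Nb + Nh}) \<in> configs n Nb Nh"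
    unfolding configs_def using assms by auto
  then show ?thesis using finite_configs by (auto simp: card_gt_0_iff)
qed

lemma sum_configs_ball_to_hole:
  "(\<Sum>(B, H)\<in>configs n (Suc Nb) Nh. \<Sum>b\<in>B. F (B - {b}) (insert b H))
     = (\<Sum>(B, H)\<in>configs n Nb (Suc Nh). \<Sum>h\<in>H. F B H)"
proof -
  let ?C = "configs n (Suc Nb) Nh" and ?C' = "configs n Nb (Suc Nh)"
  have [simp]: "X \<subseteq> {0..<n} \<Longrightarrow> finite X" for X
    by (rule finite_subset) auto
  have bij: "bij_betw (\<lambda>((B, H), b). ((B - {b}, insert b H), b)) (Sigma ?C fst) (Sigma ?C' snd)"
    by (rule bij_betw_byWitness[where f' = "\<lambda>((B, H), h). ((insert h B, H - {h}), h)"])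
      (auto simp: configs_def card_insert_if)
  have "(\<Sum>(B, H)\<in>?C. \<Sum>b\<in>B. F (B - {b}) (insert b H))
      = (\<Sum>c\<in>?C. \<Sum>b\<in>fst c. F (fst c - {b}) (insert b (snd c)))"
    by (simp add: case_prod_unfold)
  also have "\<dots> = (\<Sum>(c, b)\<in>Sigma ?C fst. F (fst c - {b}) (insert b (snd c)))"
    by (rule sum.Sigma) (use finite_configs configs_finite in auto)
  also have "\<dots> = (\<Sum>(c, h)\<in>Sigma ?C' snd. F (fst c) (snd c))"
    using bij by (simp add: sum.reindex_bij_betw[symmetric] case_prod_unfold)
  also have "\<dots> = (\<Sum>c\<in>?C'. \<Sum>h\<in>snd c. F (fst c) (snd c))"
    by (rule sum.Sigma[symmetric]) (use finite_configs configs_finite in auto)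
  finally show ?thesis by (simp add: case_prod_unfold)
qed

definition config_expect :: "nat \<Rightarrow> real \<Rightarrow> (nat set \<Rightarrow> real) \<Rightarrow> nat set \<Rightarrow> nat set \<Rightarrow> real" where
  "config_expect n p g B H = (\<Sum>xs\<in>orderings B. final_expect n p H xs g) / real (card (orderings B))"

definition golf_expect :: "nat \<Rightarrow> nat \<Rightarrow> nat \<Rightarrow> real \<Rightarrow> (nat set \<Rightarrow> real) \<Rightarrow> real" where
  "golf_expect n Nb Nh p g =
     (\<Sum>(B, H)\<in>configs n Nb Nh. config_expect n p g B H) / real (card (configs n Nb Nh))"

lemma sum_golf_H1_prob:
  assumes "finite T"
  shows "(\<Sum>S\<in>T. golf_H1_prob n Nb Nh p S) = golf_expect n Nb Nh p (\<lambda>S. of_bool (S \<in> T))"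
  unfolding golf_H1_prob_def golf_expect_def config_expect_def
  by (simp add: sum_divide_distrib sum.swap[of _ T] case_prod_unfold
      sum_final_dist[OF assms, symmetric])

context
  fixes n :: nat and p :: real and g :: "nat set \<Rightarrow> real"
  assumes p_prob: "0 \<le> p" "p \<le> 1"
    and antitone: "\<And>A A'. A \<noteq> {} \<Longrightarrow> A \<subseteq> A' \<Longrightarrow> A' \<subseteq> {0..<n} \<Longrightarrow> g A' \<le> g A"
begin

lemma sum_config_expect_ball_to_hole_le:
  assumes BH: "(B, H) \<in> configs n (Suc Nb) Nh" and "Nb + 2 \<le> Nh"
  shows "(\<Sum>b\<in>B. config_expect n p g (B - {b}) (insert b H)) \<le> Suc Nb * config_expect n p g B H"
proof -
  have B: "B \<subseteq> {0..<n}" "card B = Suc Nb" "finite B" and H: "H \<subseteq> {0..<n}" "card H = Nh"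
    and "B \<inter> H = {}"
    using BH configs_finite[OF BH] unfolding configs_def by auto
  have card_orderings_B: "card (orderings (B - {b})) = fact Nb" if "b \<in> B" for b
    using that B by (simp add: card_orderings)
  have "fact Nb * (\<Sum>b\<in>B. config_expect n p g (B - {b}) (insert b H))
      = (\<Sum>b\<in>B. \<Sum>ys\<in>orderings (B - {b}). final_expect n p (insert b H) ys g)"
    unfolding sum_distrib_left by (rule sum.cong) (simp_all add: config_expect_def card_orderings_B)
  also have "\<dots> \<le> (\<Sum>b\<in>B. \<Sum>ys\<in>orderings (B - {b}). final_expect n p H (ys @ [b]) g)"
  proof (intro sum_mono)
    fix b ys assume "b \<in> B" "ys \<in> orderings (B - {b})"
    then have "set ys = B - {b}" "length ys = Nb"
      using B by (auto simp: orderings_def distinct_card[symmetric])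
    then show "final_expect n p (insert b H) ys g \<le> final_expect n p H (ys @ [b]) g"
      using \<open>b \<in> B\<close> B H \<open>B \<inter> H = {}\<close> \<open>Nb + 2 \<le> Nh\<close>
      by (intro final_expect_ball_last_le[where g = g, OF p_prob antitone H(1)]) auto
  qed
  also have "\<dots> = (\<Sum>xs\<in>orderings B. final_expect n p H xs g)"
    by (rule sum_orderings_by_last[symmetric]) (use B in auto)
  also have "\<dots> = fact (Suc Nb) * config_expect n p g B H"
    using B by (simp add: config_expect_def card_orderings del: fact_Suc)
  also have "\<dots> = fact Nb * (Suc Nb * config_expect n p g B H)"
    by (simp add: algebra_simps)
  finally show ?thesis by simp
qed

lemma golf_expect_ball_to_hole_le:
  assumes "Suc Nb + Nh \<le> n" "Nb + 2 \<le> Nh"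
  shows "golf_expect n Nb (Suc Nh) p g \<le> golf_expect n (Suc Nb) Nh p g"
proof -
  let ?C = "configs n (Suc Nb) Nh" and ?C' = "configs n Nb (Suc Nh)"
  define X where "X = (\<Sum>(B, H)\<in>?C. config_expect n p g B H)"
  define X' where "X' = (\<Sum>(B, H)\<in>?C'. config_expect n p g B H)"
  have card_C: "real (card ?C) * Suc Nb = real (card ?C') * Suc Nh"
  proof -
    have "real (card ?C) * Suc Nb = (\<Sum>(B, H)\<in>?C. \<Sum>b\<in>B. 1)"
      by (simp add: case_prod_unfold configs_def)
    also have "\<dots> = (\<Sum>(B, H)\<in>?C'. \<Sum>h\<in>H. 1)"
      by (rule sum_configs_ball_to_hole)
    also have "\<dots> = real (card ?C') * Suc Nh"
      by (simp add: case_prod_unfold configs_def)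
    finally show ?thesis .
  qed
  have "Suc Nh * X' = (\<Sum>(B, H)\<in>?C'. \<Sum>h\<in>H. config_expect n p g B H)"
    unfolding X'_def by (simp add: sum_distrib_left case_prod_unfold configs_def)
  also have "\<dots> = (\<Sum>(B, H)\<in>?C. \<Sum>b\<in>B. config_expect n p g (B - {b}) (insert b H))"
    by (rule sum_configs_ball_to_hole[symmetric])
  also have "\<dots> \<le> (\<Sum>(B, H)\<in>?C. Suc Nb * config_expect n p g B H)"
    using sum_config_expect_ball_to_hole_le \<open>Nb + 2 \<le> Nh\<close> by (intro sum_mono) auto
  also have "\<dots> = Suc Nb * X"
    unfolding X_def by (simp add: sum_distrib_left case_prod_unfold)
  finally have "Suc Nh * X' \<le> Suc Nb * X" .
  have "Suc Nb * (X' * card ?C) = X' * (real (card ?C) * Suc Nb)"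
    by (simp add: algebra_simps)
  also have "\<dots> = card ?C' * (Suc Nh * X')"
    unfolding card_C by (simp add: algebra_simps)
  also have "\<dots> \<le> card ?C' * (Suc Nb * X)"
    using \<open>Suc Nh * X' \<le> Suc Nb * X\<close> by (intro mult_left_mono) auto
  finally have "Suc Nb * (X' * card ?C) \<le> Suc Nb * (X * card ?C')"
    by (simp add: algebra_simps)
  then have "X' * card ?C \<le> X * card ?C'" by simp
  moreover have "0 < card ?C" "0 < card ?C'"
    using card_configs_pos assms by auto
  ultimately show ?thesis
    unfolding golf_expect_def X_def[symmetric] X'_def[symmetric] by (simp add: divide_simps)
qed

end

lemma M_tail_eq_golf_expect:
  "M_tail n p Nl t = golf_expect n ((n - Nl) div 2) ((n + Nl) div 2) p
     (\<lambda>S. of_bool (S \<subseteq> {0..<n} \<and> S \<noteq> {} \<and> t \<le> max_gap n S))"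
proof -
  have "finite {S. S \<subseteq> {0..<n} \<and> S \<noteq> {} \<and> t \<le> max_gap n S}"
    by (rule finite_subset[of _ "Pow {0..<n}"]) auto
  then show ?thesis unfolding M_tail_def by (simp add: sum_golf_H1_prob)
qed

lemma M_tail_Suc_Suc_le:
  assumes "0 \<le> p" "p \<le> 1" "1 \<le> Nl" "Nl + 2 \<le> n" "Nl mod 2 = n mod 2"
  shows "M_tail n p (Nl + 2) t \<le> M_tail n p Nl t"
proof -
  have "\<exists>q. n = Nl + 2 * Suc q" using assms(4,5) by presburger
  then obtain q where n: "n = Nl + 2 * Suc q" ..
  let ?g = "\<lambda>S. of_bool (S \<subseteq> {0..<n} \<and> S \<noteq> {} \<and> t \<le> max_gap n S) :: real"
  have "?g A' \<le> ?g A" if "A \<noteq> {}" "A \<subseteq> A'" "A' \<subseteq> {0..<n}" for A A'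
    using that max_gap_antimono[OF that(2,3,1)] by auto
  then have "golf_expect n q (Suc (Nl + Suc q)) p ?g \<le> golf_expect n (Suc q) (Nl + Suc q) p ?g"
    using assms n by (intro golf_expect_ball_to_hole_le) auto
  then show ?thesis
    unfolding M_tail_eq_golf_expect n by simp
qed

theorem mainTheorem14:
  fixes n :: nat and p :: real and Nl Nl' t :: nat
  assumes "0 \<le> p" and "p \<le> 1"
    and "1 \<le> Nl" and "Nl \<le> Nl'" and "Nl' \<le> n"
    and "Nl mod 2 = n mod 2" and "Nl' mod 2 = n mod 2"
  shows "M_tail n p Nl' t \<le> M_tail n p Nl t"
proof -
  have "\<exists>k. Nl' = Nl + 2 * k" using assms(4,6,7) by presburger
  then obtain k where "Nl' = Nl + 2 * k" ..
  moreover have "M_tail n p (Nl + 2 * k) t \<le> M_tail n p Nl t" if "Nl + 2 * k \<le> n" for k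
    using that
  proof (induction k)
    case (Suc k)
    have "M_tail n p (Nl + 2 * k + 2) t \<le> M_tail n p (Nl + 2 * k) t"
      using Suc.prems assms by (intro M_tail_Suc_Suc_le) auto
    with Suc show ?case by simp
  qed simp
  ultimately show ?thesis using assms(5) by blast
qed

end
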